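(* Let $G$ be a word hyperbolic group and $0\to\mathbb Z\xrightarrow{\iota}E\xrightarrow{\pi}G\to1$ a central extension, $X$ a finite set mapping onto a symmetric generating set of $E$ (evaluation $w\mapsto\overline w\in E$). Let $C>0$ be an integer such that for every $g\in G$ the maximum $\max\{\overline w\,\iota(-C\,\mathrm{len}(w)): w\in X^*,\ \pi(\overline w)=g\}$ exists in the ordered fibre $\pi^{-1}(g)$, and define $\rho:G\to E$ by letting $\rho(g)$ be this maximum. Then for all $g\in G$ and $x\in X$: (1) $|\rho(g)\overline x-\rho(g\pi(\overline x))|\le C$; (2) $|\overline x\rho(g)-\rho(\pi(\overline x)g)|\le C$.
   Context: The order on a fibre $\pi^{-1}(g)$: $h_1\le h_2$ iff $h_2h_1^{-1}=\iota(n)$ with $n\ge0$. For $h_1,h_2$ in the same fibre, $h_1-h_2$ denotes the integer $n$ with $\iota(n)=h_1h_2^{-1}$. *)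

theory Defs
  imports "HOL-Algebra.Algebra"
begin

definition word_length :: "('g, 'b) monoid_scheme \<Rightarrow> 'g set \<Rightarrow> 'g \<Rightarrow> nat" where
  "word_length G S g = (LEAST n. \<exists>ws. length ws = n \<and> set ws \<subseteq> S \<union> m_inv G ` S
      \<and> foldr (\<otimes>\<^bsub>G\<^esub>) ws \<one>\<^bsub>G\<^esub> = g)"

definition word_dist :: "('g, 'b) monoid_scheme \<Rightarrow> 'g set \<Rightarrow> 'g \<Rightarrow> 'g \<Rightarrow> real" where
  "word_dist G S a b = real (word_length G S (inv\<^bsub>G\<^esub> a \<otimes>\<^bsub>G\<^esub> b))"

definition gromov_product :: "('g, 'b) monoid_scheme \<Rightarrow> 'g set \<Rightarrow> 'g \<Rightarrow> 'g \<Rightarrow> 'g \<Rightarrow> real" where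
  "gromov_product G S w x y = (word_dist G S x w + word_dist G S y w - word_dist G S x y) / 2"

definition hyperbolic_group :: "('g, 'b) monoid_scheme \<Rightarrow> bool" where
  "hyperbolic_group G \<longleftrightarrow> group G \<and>
     (\<exists>S (\<delta>::real). finite S \<and> S \<subseteq> carrier G \<and> generate G S = carrier G \<and>
        (\<forall>x\<in>carrier G. \<forall>y\<in>carrier G. \<forall>z\<in>carrier G. \<forall>w\<in>carrier G.
           gromov_product G S w x z \<ge> min (gromov_product G S w x y) (gromov_product G S w y z) - \<delta>))"

definition central_extension ::
  "('g, 'b) monoid_scheme \<Rightarrow> ('e, 'c) monoid_scheme \<Rightarrow> (int \<Rightarrow> 'e) \<Rightarrow> ('e \<Rightarrow> 'g) \<Rightarrow> bool" where
  "central_extension G E \<iota> \<pi> \<longleftrightarrow> group G \<and> group E \<and>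
     \<iota> \<in> hom integer_group E \<and> inj \<iota> \<and>
     \<pi> \<in> hom E G \<and> \<pi> ` carrier E = carrier G \<and>
     kernel E G \<pi> = range \<iota> \<and>
     (\<forall>n. \<forall>e\<in>carrier E. \<iota> n \<otimes>\<^bsub>E\<^esub> e = e \<otimes>\<^bsub>E\<^esub> \<iota> n)"

definition fib_le :: "('e, 'c) monoid_scheme \<Rightarrow> (int \<Rightarrow> 'e) \<Rightarrow> 'e \<Rightarrow> 'e \<Rightarrow> bool" where
  "fib_le E \<iota> h1 h2 \<longleftrightarrow> (\<exists>n\<ge>0. h2 \<otimes>\<^bsub>E\<^esub> inv\<^bsub>E\<^esub> h1 = \<iota> n)"

definition fib_diff :: "('e, 'c) monoid_scheme \<Rightarrow> (int \<Rightarrow> 'e) \<Rightarrow> 'e \<Rightarrow> 'e \<Rightarrow> int" where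
  "fib_diff E \<iota> h1 h2 = (THE n. \<iota> n = h1 \<otimes>\<^bsub>E\<^esub> inv\<^bsub>E\<^esub> h2)"

definition eval_word :: "('e, 'c) monoid_scheme \<Rightarrow> ('x \<Rightarrow> 'e) \<Rightarrow> 'x list \<Rightarrow> 'e" where
  "eval_word E ev w = foldr (\<lambda>x a. ev x \<otimes>\<^bsub>E\<^esub> a) w \<one>\<^bsub>E\<^esub>"

end

theory Submission
  imports Defs
begin

(* Appending a letter x to a word representing g yields a word representing g pi(x) whose
   penalized value is the old one times x iota(-C). Maximality of rho therefore gives
   rho(g) x <= rho(g pi(x)) iota(C); the same argument for g pi(x) and the inverse letter
   gives the opposite bound. Prepending letters gives (2) in the same way, since iota is
   central. Hyperbolicity, finiteness, generation and C > 0 only matter for the existence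
   of the maxima, which is assumed. *)

lemma eval_word_Cons [simp]: "eval_word E ev (x # w) = ev x \<otimes>\<^bsub>E\<^esub> eval_word E ev w"
  by (simp add: eval_word_def)

lemma (in monoid) eval_word_closed:
  "ev ` set w \<subseteq> carrier G \<Longrightarrow> eval_word G ev w \<in> carrier G"
  by (induction w) (auto simp: eval_word_def)

lemma (in monoid) eval_word_append:
  assumes "ev ` set v \<subseteq> carrier G" "ev ` set w \<subseteq> carrier G"
  shows "eval_word G ev (v @ w) = eval_word G ev v \<otimes> eval_word G ev w"
  using assms(1)
proof (induction v)
  case Nil
  then show ?case
    using eval_word_closed[OF assms(2)] by (simp add: eval_word_def)
next
  case (Cons x v)
  then show ?case
    using eval_word_closed[of ev v] eval_word_closed[OF assms(2)]
    by (simp add: eval_word_def m_assoc)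
qed

locale central_ext = group E for E (structure) +
  fixes iota :: "int \<Rightarrow> 'a"
  assumes iota_hom: "iota \<in> hom integer_group E"
    and iota_inj: "inj iota"
    and iota_central: "e \<in> carrier E \<Longrightarrow> iota n \<otimes> e = e \<otimes> iota n"
begin

lemma iota_closed [simp]: "iota n \<in> carrier E"
  using iota_hom by (auto simp: hom_def)

lemma iota_add: "iota (m + n) = iota m \<otimes> iota n"
  using hom_mult[OF iota_hom] by simp

lemma iota_zero: "iota 0 = \<one>"
  using group_hom.hom_one[of integer_group E iota] iota_hom
  by (simp add: group_hom_def group_hom_axioms_def is_group)

lemma iota_add_left: "a \<in> carrier E \<Longrightarrow> iota m \<otimes> (iota n \<otimes> a) = iota (m + n) \<otimes> a"
  by (simp add: iota_add m_assoc)

lemma fib_le_iff: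
  assumes "a \<in> carrier E" "b \<in> carrier E"
  shows "fib_le E iota a b \<longleftrightarrow> (\<exists>n\<ge>0. b = iota n \<otimes> a)"
  using assms by (simp add: fib_le_def inv_solve_right')

lemma fib_diff_eq:
  assumes "b \<in> carrier E" "a = iota n \<otimes> b"
  shows "fib_diff E iota a b = n"
proof -
  have "a \<otimes> inv b = iota n"
    using assms by (simp add: m_assoc)
  with iota_inj show ?thesis
    by (auto simp: fib_diff_def dest: injD)
qed

lemma fib_le_mult_right:
  assumes "fib_le E iota a b" "a \<in> carrier E" "b \<in> carrier E" "c \<in> carrier E"
  shows "fib_le E iota (a \<otimes> c) (b \<otimes> c)"
  using assms by (auto simp: fib_le_iff m_assoc)

lemma fib_le_mult_left:
  assumes "fib_le E iota a b" "a \<in> carrier E" "b \<in> carrier E" "c \<in> carrier E"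
  shows "fib_le E iota (c \<otimes> a) (c \<otimes> b)"
proof -
  have "c \<otimes> (iota n \<otimes> a) = iota n \<otimes> (c \<otimes> a)" for n
    using assms by (metis iota_central iota_closed m_assoc)
  then show ?thesis
    using assms by (auto simp: fib_le_iff)
qed

lemma abs_fib_diff_le:
  assumes a: "a \<in> carrier E" and b: "b \<in> carrier E"
    and ab: "fib_le E iota (a \<otimes> iota (- C)) b" and ba: "fib_le E iota (b \<otimes> iota (- C)) a"
  shows "\<bar>fib_diff E iota a b\<bar> \<le> C"
proof -
  have shift: "\<exists>n\<ge>0. z = iota (n - C) \<otimes> y"
    if y: "y \<in> carrier E" and z: "z \<in> carrier E" and yz: "fib_le E iota (y \<otimes> iota (- C)) z"
    for y z
  proof -
    obtain n where "n \<ge> 0" and "z = iota n \<otimes> (iota (- C) \<otimes> y)"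
      using yz y z fib_le_iff[of "y \<otimes> iota (- C)" z] iota_central[of y "- C"] by auto
    then show ?thesis
      using y by (auto simp: iota_add_left)
  qed
  obtain n1 where "n1 \<ge> 0" and n1: "b = iota (n1 - C) \<otimes> a"
    using shift[OF a b ab] by blast
  obtain n2 where "n2 \<ge> 0" and n2: "a = iota (n2 - C) \<otimes> b"
    using shift[OF b a ba] by blast
  have "a = iota (C - n1) \<otimes> b"
    using n1 a by (simp add: iota_add_left iota_zero)
  then have "C - n1 = n2 - C"
    using n2 b iota_inj by (metis r_cancel iota_closed injD)
  moreover have "fib_diff E iota a b = n2 - C"
    using b n2 by (rule fib_diff_eq)
  ultimately show ?thesis
    using \<open>n1 \<ge> 0\<close> \<open>n2 \<ge> 0\<close> by simp
qed

end

locale penalized_words = central_ext E iota for E (structure) and iota +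
  fixes S :: "'x set" and ev :: "'x \<Rightarrow> 'a" and C :: int
  assumes ev_closed: "ev ` S \<subseteq> carrier E"
begin

definition penalized_eval :: "'x list \<Rightarrow> 'a" where
  "penalized_eval w = eval_word E ev w \<otimes> iota (- C * int (length w))"

lemma eval_word_carrier: "set w \<subseteq> S \<Longrightarrow> eval_word E ev w \<in> carrier E"
  using ev_closed by (intro eval_word_closed) auto

lemma penalized_eval_closed: "set w \<subseteq> S \<Longrightarrow> penalized_eval w \<in> carrier E"
  by (simp add: penalized_eval_def eval_word_carrier)

lemma eval_word_snoc:
  assumes w: "set w \<subseteq> S" and x: "x \<in> S"
  shows "eval_word E ev (w @ [x]) = eval_word E ev w \<otimes> ev x"
proof -
  have "eval_word E ev (w @ [x]) = eval_word E ev w \<otimes> eval_word E ev [x]"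
    using w x ev_closed by (intro eval_word_append) auto
  also have "eval_word E ev [x] = ev x"
    using x ev_closed by (auto simp: eval_word_def)
  finally show ?thesis .
qed

lemma penalized_eval_snoc:
  assumes w: "set w \<subseteq> S" and x: "x \<in> S"
  shows "penalized_eval (w @ [x]) = penalized_eval w \<otimes> ev x \<otimes> iota (- C)"
proof -
  have evx: "ev x \<in> carrier E" and eval_w: "eval_word E ev w \<in> carrier E"
    using ev_closed x w by (auto simp: eval_word_carrier)
  have len: "- C * int (length (w @ [x])) = - C * int (length w) + - C"
    by (simp add: algebra_simps)
  show ?thesis
    unfolding penalized_eval_def eval_word_snoc[OF w x] len iota_add
    using evx eval_w iota_central[OF evx] by (simp add: m_assoc)
qed

lemma penalized_eval_Cons:
  assumes w: "set w \<subseteq> S" and x: "x \<in> S"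
  shows "penalized_eval (x # w) = ev x \<otimes> penalized_eval w \<otimes> iota (- C)"
proof -
  have evx: "ev x \<in> carrier E" and eval_w: "eval_word E ev w \<in> carrier E"
    using ev_closed x w by (auto simp: eval_word_carrier)
  have len: "- C * int (length (x # w)) = - C * int (length w) + - C"
    by (simp add: algebra_simps)
  show ?thesis
    unfolding penalized_eval_def eval_word_Cons len iota_add
    using evx eval_w by (simp add: m_assoc)
qed

end

locale fibre_max_section = penalized_words E iota S ev C + G: group G
  for E (structure) and iota S ev C and G (structure) +
  fixes pr rho
  assumes pr_hom: "pr \<in> hom E G"
    and ev_inv_closed: "x \<in> S \<Longrightarrow> \<exists>y\<in>S. ev y = inv (ev x)"
    and rho_attained: "g \<in> carrier G \<Longrightarrow>
      \<exists>w. set w \<subseteq> S \<and> pr (eval_word E ev w) = g \<and> rho g = penalized_eval w"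
    and rho_upper: "set w \<subseteq> S \<Longrightarrow>
      fib_le E iota (penalized_eval w) (rho (pr (eval_word E ev w)))"
begin

sublocale pr: group_hom E G pr
  using pr_hom by unfold_locales

lemma rho_closed: "g \<in> carrier G \<Longrightarrow> rho g \<in> carrier E"
  using rho_attained penalized_eval_closed by metis

lemma rho_step_right:
  assumes g: "g \<in> carrier G" and x: "x \<in> S"
  shows "fib_le E iota (rho g \<otimes> ev x \<otimes> iota (- C)) (rho (g \<otimes>\<^bsub>G\<^esub> pr (ev x)))"
proof -
  obtain w where w: "set w \<subseteq> S" "pr (eval_word E ev w) = g" "rho g = penalized_eval w"
    using rho_attained[OF g] by blast
  have "pr (eval_word E ev (w @ [x])) = g \<otimes>\<^bsub>G\<^esub> pr (ev x)"
    using w x ev_closed by (auto simp: eval_word_snoc eval_word_carrier)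
  then show ?thesis
    using rho_upper[of "w @ [x]"] penalized_eval_snoc[OF w(1) x] w x by simp
qed

lemma rho_step_left:
  assumes g: "g \<in> carrier G" and x: "x \<in> S"
  shows "fib_le E iota (ev x \<otimes> rho g \<otimes> iota (- C)) (rho (pr (ev x) \<otimes>\<^bsub>G\<^esub> g))"
proof -
  obtain w where w: "set w \<subseteq> S" "pr (eval_word E ev w) = g" "rho g = penalized_eval w"
    using rho_attained[OF g] by blast
  have "pr (eval_word E ev (x # w)) = pr (ev x) \<otimes>\<^bsub>G\<^esub> g"
    using w x ev_closed by (auto simp: eval_word_carrier)
  then show ?thesis
    using rho_upper[of "x # w"] penalized_eval_Cons[OF w(1) x] w x by simp
qed

lemma rho_right_translate_bounded:
  assumes g: "g \<in> carrier G" and x: "x \<in> S"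
  shows "\<bar>fib_diff E iota (rho g \<otimes> ev x) (rho (g \<otimes>\<^bsub>G\<^esub> pr (ev x)))\<bar> \<le> C"
proof -
  define g' where "g' = g \<otimes>\<^bsub>G\<^esub> pr (ev x)"
  obtain y where y: "y \<in> S" "ev y = inv (ev x)"
    using ev_inv_closed[OF x] by blast
  have evx: "ev x \<in> carrier E"
    using x ev_closed by auto
  have g': "g' \<in> carrier G"
    using g evx by (simp add: g'_def)
  have "g' \<otimes>\<^bsub>G\<^esub> pr (ev y) = g"
    using g evx by (simp add: g'_def y(2) G.m_assoc)
  then have "fib_le E iota (rho g' \<otimes> inv (ev x) \<otimes> iota (- C)) (rho g)"
    using rho_step_right[OF g' y(1)] y(2) by simp
  then have "fib_le E iota (rho g' \<otimes> inv (ev x) \<otimes> iota (- C) \<otimes> ev x) (rho g \<otimes> ev x)"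
    using g g' evx rho_closed by (intro fib_le_mult_right) auto
  also have "rho g' \<otimes> inv (ev x) \<otimes> iota (- C) \<otimes> ev x = rho g' \<otimes> iota (- C)"
    using rho_closed[OF g'] evx
    by (simp add: m_assoc iota_central[OF evx] flip: m_assoc[of "inv (ev x)"])
  finally have "fib_le E iota (rho g' \<otimes> iota (- C)) (rho g \<otimes> ev x)" .
  then show ?thesis
    using rho_step_right[OF g x] g g' evx rho_closed
    by (intro abs_fib_diff_le) (auto simp: g'_def)
qed

lemma rho_left_translate_bounded:
  assumes g: "g \<in> carrier G" and x: "x \<in> S"
  shows "\<bar>fib_diff E iota (ev x \<otimes> rho g) (rho (pr (ev x) \<otimes>\<^bsub>G\<^esub> g))\<bar> \<le> C"
proof -
  define g' where "g' = pr (ev x) \<otimes>\<^bsub>G\<^esub> g"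
  obtain y where y: "y \<in> S" "ev y = inv (ev x)"
    using ev_inv_closed[OF x] by blast
  have evx: "ev x \<in> carrier E"
    using x ev_closed by auto
  have g': "g' \<in> carrier G"
    using g evx by (simp add: g'_def)
  have "pr (ev y) \<otimes>\<^bsub>G\<^esub> g' = g"
    using g evx by (simp add: g'_def y(2) G.m_assoc[symmetric])
  then have "fib_le E iota (inv (ev x) \<otimes> rho g' \<otimes> iota (- C)) (rho g)"
    using rho_step_left[OF g' y(1)] y(2) by simp
  then have "fib_le E iota (ev x \<otimes> (inv (ev x) \<otimes> rho g' \<otimes> iota (- C))) (ev x \<otimes> rho g)"
    using g g' evx rho_closed by (intro fib_le_mult_left) auto
  also have "ev x \<otimes> (inv (ev x) \<otimes> rho g' \<otimes> iota (- C)) = rho g' \<otimes> iota (- C)"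
    using g' evx rho_closed by (simp add: m_assoc[symmetric])
  finally have "fib_le E iota (rho g' \<otimes> iota (- C)) (ev x \<otimes> rho g)" .
  then show ?thesis
    using rho_step_left[OF g x] g g' evx rho_closed
    by (intro abs_fib_diff_le) (auto simp: g'_def)
qed

end

lemma central_extension_penalized_words:
  assumes "central_extension G E iota pr" and "ev ` S \<subseteq> carrier E"
  shows "penalized_words E iota S ev"
proof (intro penalized_words.intro penalized_words_axioms.intro central_ext.intro
    central_ext_axioms.intro)
  show "group E" "iota \<in> hom integer_group E" "inj iota"
    using assms(1) by (auto simp: central_extension_def)
  show "iota n \<otimes>\<^bsub>E\<^esub> e = e \<otimes>\<^bsub>E\<^esub> iota n" if "e \<in> carrier E" for n e
    using assms(1) that by (auto simp: central_extension_def)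
qed (fact assms(2))

theorem lemma2p3:
  fixes G :: "('g, 'b) monoid_scheme" and E :: "('e, 'c) monoid_scheme"
    and iota :: "int \<Rightarrow> 'e" and pr :: "'e \<Rightarrow> 'g"
    and Xgen :: "'x set" and ev :: "'x \<Rightarrow> 'e"
    and C :: int and rho :: "'g \<Rightarrow> 'e"
  assumes hyp: "hyperbolic_group G"
    and ext: "central_extension G E iota pr"
    and finX: "finite Xgen"
    and evX: "ev ` Xgen \<subseteq> carrier E"
    and symX: "\<forall>a\<in>ev ` Xgen. inv\<^bsub>E\<^esub> a \<in> ev ` Xgen"
    and genX: "generate E (ev ` Xgen) = carrier E"
    and Cpos: "C > 0"
    and rho_max: "\<forall>g\<in>carrier G.
       rho g \<in> {eval_word E ev w \<otimes>\<^bsub>E\<^esub> iota (- C * int (length w)) | w. set w \<subseteq> Xgen \<and> pr (eval_word E ev w) = g}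
       \<and> (\<forall>h\<in>{eval_word E ev w \<otimes>\<^bsub>E\<^esub> iota (- C * int (length w)) | w. set w \<subseteq> Xgen \<and> pr (eval_word E ev w) = g}.
            fib_le E iota h (rho g))"
    and g: "g \<in> carrier G" and x: "x \<in> Xgen"
  shows "\<bar>fib_diff E iota (rho g \<otimes>\<^bsub>E\<^esub> ev x) (rho (g \<otimes>\<^bsub>G\<^esub> pr (ev x)))\<bar> \<le> C
     \<and> \<bar>fib_diff E iota (ev x \<otimes>\<^bsub>E\<^esub> rho g) (rho (pr (ev x) \<otimes>\<^bsub>G\<^esub> g))\<bar> \<le> C"
proof -
  interpret penalized_words E iota Xgen ev C
    using ext evX by (rule central_extension_penalized_words)
  have pr_hom: "pr \<in> hom E G"
    using ext by (simp add: central_extension_def)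
  interpret fibre_max_section E iota Xgen ev C G pr rho
  proof (intro fibre_max_section.intro fibre_max_section_axioms.intro)
    show "penalized_words E iota Xgen ev"
      by unfold_locales
    show "group G"
      using ext by (simp add: central_extension_def)
    show "pr \<in> hom E G"
      by (fact pr_hom)
    show "\<exists>y\<in>Xgen. ev y = inv\<^bsub>E\<^esub> ev x" if "x \<in> Xgen" for x
      using symX that by force
    show "\<exists>w. set w \<subseteq> Xgen \<and> pr (eval_word E ev w) = g \<and> rho g = penalized_eval w"
      if "g \<in> carrier G" for g
      using bspec[OF rho_max that] unfolding penalized_eval_def by blast
    show "fib_le E iota (penalized_eval w) (rho (pr (eval_word E ev w)))"
      if "set w \<subseteq> Xgen" for w
    proof -
      have "pr (eval_word E ev w) \<in> carrier G"
        using pr_hom eval_word_carrier[OF that] by (rule hom_in_carrier)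
      then show ?thesis
        using bspec[OF rho_max] that unfolding penalized_eval_def by blast
    qed
  qed
  show ?thesis
    using rho_right_translate_bounded[OF g x] rho_left_translate_bounded[OF g x] by simp
qed

end
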